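(* Let $B$ be a vector space over a field $\mathbb{K}$ of characteristic zero with basis $b_1,\dots,b_n$, $n\geq3$, let $w\colon B\times B\to B^*$ be bilinear with $c_{ijk}:=w(b_i,b_j)(b_k)$, and let $b_1^*,\dots,b_n^*$ be the dual basis. On $\mathfrak{L}=B\oplus B^*$ define $[b+\beta,b'+\beta']=w(b,b')$ and $\phi(b+\beta,b'+\beta')=\beta(b')+\beta'(b)$. The following are equivalent: (a) $(\mathfrak{L},\phi)$ is a $2$-step nilpotent quadratic Lie algebra. (b) $w$ is a nonzero cyclic $2$-cocycle (for the abelian Lie algebra $B$) and $(\mathfrak{L},\phi)=(T^*_wB,q_B)$. (c) Setting $A_k=\mathrm{span}\langle b_i,b_i^*:i=1,\dots,k\rangle$ and, for $1\le i\le n$, $d_{i-1}\colon A_{i-1}\to A_{i-1}$ linear with $d_{i-1}(b_j^* )=0$ and $d_{i-1}(b_j)=\sum_{k=1}^{i-1}c_{ijk}b_k^*$ for $j<i$, the sequence $\{(A_k,f_k)\}_{k=0}^n$ starting at $A_0=\{0\}$, $f_0=0$, given by $\{(b_{k+1},d_k)\}_{k=0}^{n-1}$, is a chain of one-dimensional double extensions satisfying (NNP) and (2SP), and $(A_n,f_n)=(\mathfrak{L},\phi)$. (d) The family $\{M_1,\dots,M_n\}$ of $n\times n$ matrices where the $(k,j)$ entry of $M_i$ is $c_{ijk}$ is a non-null $n$-quadratic family, and the quadratic algebra it defines equals $(\mathfrak{L},\phi)$ (under $v_i=b_i$, $z_i=b_i^*$).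
   Context: A quadratic Lie algebra is a Lie algebra with a non-degenerate symmetric bilinear form $\phi$ with $\phi([x,y],z)+\phi(y,[x,z])=0$; $2$-step nilpotent means $[L,[L,L]]=0\neq[L,L]$. For $B$ abelian, a $2$-cocycle $w\colon B\times B\to B^*$ (coadjoint coefficients) is a skew-symmetric bilinear map; $w$ is cyclic if $w(a,b)(c)=w(c,a)(b)=w(b,c)(a)$. The $T^*$-extension $(T^*_wB,q_B)$ of abelian $B$ is $B\oplus B^*$ with bracket $[b+\beta,b'+\beta']=w(b,b')$ and $q_B(b+\beta,b'+\beta')=\beta(b')+\beta'(b)$. One-dimensional double extension of a quadratic Lie algebra $(A,f)$ by $(b,d)$, $d$ an $f$-skew-symmetric derivation ($f(d(x),y)+f(x,d(y))=0$): the space $\mathbb{K}b\oplus A\oplus\mathbb{K}b^*$ with bracket $[\lambda b+a+\mu b^*,\lambda'b+a'+\mu'b^*]=\lambda d(a')-\lambda'd(a)+[a,a']_A+f(d(a),a')b^*$ and form $(\lambda b+a+\mu b^*,\lambda'b+a'+\mu'b^* )\mapsto\lambda\mu'+\lambda'\mu+f(a,a')$. A chain of one-dimensional double extensions $\{(A_k,f_k)\}_{k=0}^n$ by $\{(b_{k+1},d_k)\}$: $A_0=0$, $f_0=0$, each $d_k$ an $f_k$-skew-symmetric derivation of $A_k$, and $(A_{k+1},f_{k+1})$ the one-dimensional double extension of $(A_k,f_k)$ by $(b_{k+1},d_k)$. With $A_{k,2}=\mathrm{span}\langle b_1^*,\dots,b_k^*\rangle$: (NNP) means $d_k\ne0$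 for some $k$; (2SP) means $\mathrm{im}\,d_k\subseteq A_{k,2}\subseteq\ker d_k$ for all $k\ge1$. A family $\{M_1,\dots,M_n\}$ of $n\times n$ matrices is $n$-quadratic if each $M_i$ is skew-symmetric, the $i$-th column of $M_i$ is zero, and for $j>i$ the $j$-th column of $M_i$ is the negative of the $i$-th column of $M_j$; non-null means not all matrices are zero. The quadratic algebra defined by such a family (with $m_{ijk}$ the $(k,j)$ entry of $M_i$) has basis $v_1,\dots,v_n,z_1,\dots,z_n$, bracket $[v_i,v_j]=\sum_k m_{ijk}z_k$, $[z_i,\cdot]=0$, and form $\varphi(v_i,v_j)=\varphi(z_i,z_j)=0$, $\varphi(v_i,z_j)=\delta_{ij}$. *)

theory Defs
  imports Main "HOL-Library.Function_Algebras"
begin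

text \<open>Vectors are coordinate functions; vector addition, zero and negation are
pointwise (Function_Algebras).  Scalar multiplication:\<close>

definition sc :: "'a::field \<Rightarrow> ('i \<Rightarrow> 'a) \<Rightarrow> ('i \<Rightarrow> 'a)" where
  "sc a x = (\<lambda>t. a * x t)"

definition subspace_c :: "('i \<Rightarrow> 'a::field) set \<Rightarrow> bool" where
  "subspace_c V \<longleftrightarrow> 0 \<in> V \<and> (\<forall>x\<in>V. \<forall>y\<in>V. x + y \<in> V) \<and> (\<forall>a. \<forall>x\<in>V. sc a x \<in> V)"

definition bilinear_map_on :: "('i \<Rightarrow> 'a::field) set \<Rightarrow> (('i \<Rightarrow> 'a) \<Rightarrow> ('i \<Rightarrow> 'a) \<Rightarrow> ('j \<Rightarrow> 'a)) \<Rightarrow> bool" where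
  "bilinear_map_on V br \<longleftrightarrow> (\<forall>x\<in>V. \<forall>y\<in>V. \<forall>z\<in>V. \<forall>a.
      br (x + y) z = br x z + br y z \<and> br x (y + z) = br x y + br x z \<and>
      br (sc a x) y = sc a (br x y) \<and> br x (sc a y) = sc a (br x y))"

definition bilinear_form_on :: "('i \<Rightarrow> 'a::field) set \<Rightarrow> (('i \<Rightarrow> 'a) \<Rightarrow> ('i \<Rightarrow> 'a) \<Rightarrow> 'a) \<Rightarrow> bool" where
  "bilinear_form_on V f \<longleftrightarrow> (\<forall>x\<in>V. \<forall>y\<in>V. \<forall>z\<in>V. \<forall>a.
      f (x + y) z = f x z + f y z \<and> f x (y + z) = f x y + f x z \<and>
      f (sc a x) y = a * f x y \<and> f x (sc a y) = a * f x y)"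

definition lie_algebra_on :: "('i \<Rightarrow> 'a::field) set \<Rightarrow> (('i \<Rightarrow> 'a) \<Rightarrow> ('i \<Rightarrow> 'a) \<Rightarrow> ('i \<Rightarrow> 'a)) \<Rightarrow> bool" where
  "lie_algebra_on V br \<longleftrightarrow> subspace_c V \<and> (\<forall>x\<in>V. \<forall>y\<in>V. br x y \<in> V) \<and>
     bilinear_map_on V br \<and> (\<forall>x\<in>V. br x x = 0) \<and>
     (\<forall>x\<in>V. \<forall>y\<in>V. \<forall>z\<in>V. br x (br y z) + br y (br z x) + br z (br x y) = 0)"

definition quadratic_lie_algebra :: "('i \<Rightarrow> 'a::field) set \<Rightarrow> (('i \<Rightarrow> 'a) \<Rightarrow> ('i \<Rightarrow> 'a) \<Rightarrow> ('i \<Rightarrow> 'a))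
     \<Rightarrow> (('i \<Rightarrow> 'a) \<Rightarrow> ('i \<Rightarrow> 'a) \<Rightarrow> 'a) \<Rightarrow> bool" where
  "quadratic_lie_algebra V br \<phi> \<longleftrightarrow> lie_algebra_on V br \<and> bilinear_form_on V \<phi> \<and>
     (\<forall>x\<in>V. \<forall>y\<in>V. \<phi> x y = \<phi> y x) \<and>
     (\<forall>x\<in>V. (\<forall>y\<in>V. \<phi> x y = 0) \<longrightarrow> x = 0) \<and>
     (\<forall>x\<in>V. \<forall>y\<in>V. \<forall>z\<in>V. \<phi> (br x y) z + \<phi> y (br x z) = 0)"

definition two_step_nilpotent :: "('i \<Rightarrow> 'a::field) set \<Rightarrow> (('i \<Rightarrow> 'a) \<Rightarrow> ('i \<Rightarrow> 'a) \<Rightarrow> ('i \<Rightarrow> 'a)) \<Rightarrow> bool" where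
  "two_step_nilpotent V br \<longleftrightarrow> (\<forall>x\<in>V. \<forall>y\<in>V. \<forall>z\<in>V. br x (br y z) = 0) \<and>
     (\<exists>x\<in>V. \<exists>y\<in>V. br x y \<noteq> 0)"

text \<open>An element of L is a coordinate function on nat + nat: the coefficient of
b_i is v (Inl i), the coefficient of the dual basis vector b_i^* is v (Inr i),
indices 1..n.  Acar k = span of b_i, b_i^* for i = 1..k (Acar n = L, Acar 0 = {0}).
Elements of B are coordinate functions nat => 'a supported in 1..n.\<close>

definition Acar :: "nat \<Rightarrow> (nat + nat \<Rightarrow> 'a::field) set" where
  "Acar k = {v. \<forall>i. (i < 1 \<or> k < i) \<longrightarrow> v (Inl i) = 0 \<and> v (Inr i) = 0}"

definition A2car :: "nat \<Rightarrow> (nat + nat \<Rightarrow> 'a::field) set" where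
  "A2car k = {v. \<forall>i. v (Inl i) = 0 \<and> ((i < 1 \<or> k < i) \<longrightarrow> v (Inr i) = 0)}"

definition Bcar :: "nat \<Rightarrow> (nat \<Rightarrow> 'a::field) set" where
  "Bcar n = {x. \<forall>i. (i < 1 \<or> n < i) \<longrightarrow> x i = 0}"

definition bvec :: "nat \<Rightarrow> (nat + nat \<Rightarrow> 'a::field)" where
  "bvec i = (\<lambda>t. if t = Inl i then 1 else 0)"

definition dvec :: "nat \<Rightarrow> (nat + nat \<Rightarrow> 'a::field)" where
  "dvec i = (\<lambda>t. if t = Inr i then 1 else 0)"

definition Bbasis :: "nat \<Rightarrow> (nat \<Rightarrow> 'a::field)" where
  "Bbasis i = (\<lambda>j. if j = i then 1 else 0)"

text \<open>The bilinear map w : B x B -> B^* determined by c_ijk = w(b_i,b_j)(b_k);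
  wfun c n x y z = w(x,y)(z).\<close>

definition wfun :: "(nat \<Rightarrow> nat \<Rightarrow> nat \<Rightarrow> 'a::field) \<Rightarrow> nat \<Rightarrow> (nat \<Rightarrow> 'a) \<Rightarrow> (nat \<Rightarrow> 'a) \<Rightarrow> (nat \<Rightarrow> 'a) \<Rightarrow> 'a" where
  "wfun c n x y z = (\<Sum>i=1..n. \<Sum>j=1..n. \<Sum>k=1..n. x i * y j * z k * c i j k)"

definition Lbr :: "(nat \<Rightarrow> nat \<Rightarrow> nat \<Rightarrow> 'a::field) \<Rightarrow> nat \<Rightarrow> (nat + nat \<Rightarrow> 'a) \<Rightarrow> (nat + nat \<Rightarrow> 'a) \<Rightarrow> (nat + nat \<Rightarrow> 'a)" where
  "Lbr c n v u = (\<lambda>t. case t of Inl _ \<Rightarrow> 0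
      | Inr k \<Rightarrow> if 1 \<le> k \<and> k \<le> n then (\<Sum>i=1..n. \<Sum>j=1..n. v (Inl i) * u (Inl j) * c i j k) else 0)"

definition Lform :: "nat \<Rightarrow> (nat + nat \<Rightarrow> 'a::field) \<Rightarrow> (nat + nat \<Rightarrow> 'a) \<Rightarrow> 'a" where
  "Lform n v u = (\<Sum>i=1..n. v (Inr i) * u (Inl i) + u (Inr i) * v (Inl i))"

text \<open>For abelian B, a 2-cocycle with coadjoint coefficients is a skew-symmetric
bilinear map w : B x B -> B^* (elements of B^* are linear functionals on B).\<close>

definition cocycle_abelian :: "nat \<Rightarrow> ((nat \<Rightarrow> 'a::field) \<Rightarrow> (nat \<Rightarrow> 'a) \<Rightarrow> (nat \<Rightarrow> 'a) \<Rightarrow> 'a) \<Rightarrow> bool" where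
  "cocycle_abelian n w \<longleftrightarrow>
     (\<forall>x\<in>Bcar n. \<forall>y\<in>Bcar n. \<forall>z\<in>Bcar n. \<forall>u\<in>Bcar n. \<forall>a.
        w (x + u) y z = w x y z + w u y z \<and> w x (y + u) z = w x y z + w x u z \<and>
        w x y (z + u) = w x y z + w x y u \<and>
        w (sc a x) y z = a * w x y z \<and> w x (sc a y) z = a * w x y z \<and> w x y (sc a z) = a * w x y z) \<and>
     (\<forall>x\<in>Bcar n. \<forall>y\<in>Bcar n. \<forall>z\<in>Bcar n. w x y z = - w y x z)"

definition cyclic_cocycle :: "nat \<Rightarrow> ((nat \<Rightarrow> 'a::field) \<Rightarrow> (nat \<Rightarrow> 'a) \<Rightarrow> (nat \<Rightarrow> 'a) \<Rightarrow> 'a) \<Rightarrow> bool" where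
  "cyclic_cocycle n w \<longleftrightarrow> cocycle_abelian n w \<and>
     (\<forall>x\<in>Bcar n. \<forall>y\<in>Bcar n. \<forall>z\<in>Bcar n. w x y z = w z x y \<and> w z x y = w y z x)"

definition nonzero_w :: "nat \<Rightarrow> ((nat \<Rightarrow> 'a::field) \<Rightarrow> (nat \<Rightarrow> 'a) \<Rightarrow> (nat \<Rightarrow> 'a) \<Rightarrow> 'a) \<Rightarrow> bool" where
  "nonzero_w n w \<longleftrightarrow> (\<exists>x\<in>Bcar n. \<exists>y\<in>Bcar n. \<exists>z\<in>Bcar n. w x y z \<noteq> 0)"

text \<open>T*_w B = B + B^* with [b+beta,b'+beta'] = w(b,b') and q_B; written in the
basis b_i, b_i^* (coordinate of w(b,b') on b_k^* is w(b,b')(b_k)).\<close>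

definition Tstar_br :: "nat \<Rightarrow> ((nat \<Rightarrow> 'a::field) \<Rightarrow> (nat \<Rightarrow> 'a) \<Rightarrow> (nat \<Rightarrow> 'a) \<Rightarrow> 'a)
     \<Rightarrow> (nat + nat \<Rightarrow> 'a) \<Rightarrow> (nat + nat \<Rightarrow> 'a) \<Rightarrow> (nat + nat \<Rightarrow> 'a)" where
  "Tstar_br n w v u = (\<lambda>t. case t of Inl _ \<Rightarrow> 0
      | Inr k \<Rightarrow> if 1 \<le> k \<and> k \<le> n then w (v \<circ> Inl) (u \<circ> Inl) (Bbasis k) else 0)"

definition qB :: "nat \<Rightarrow> (nat + nat \<Rightarrow> 'a::field) \<Rightarrow> (nat + nat \<Rightarrow> 'a) \<Rightarrow> 'a" where
  "qB n v u = (\<Sum>i=1..n. v (Inr i) * u (Inl i)) + (\<Sum>i=1..n. u (Inr i) * v (Inl i))"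

text \<open>proj k v is the A_k-component of v.  The one-dimensional double extension of
(A_k, br, f) by (b, d) is realised on A_{k+1} with b = b_{k+1}, b^* = b_{k+1}^*.\<close>

definition proj :: "nat \<Rightarrow> (nat + nat \<Rightarrow> 'a::field) \<Rightarrow> (nat + nat \<Rightarrow> 'a)" where
  "proj k v = (\<lambda>t. case t of Inl i \<Rightarrow> if 1 \<le> i \<and> i \<le> k then v t else 0
                          | Inr i \<Rightarrow> if 1 \<le> i \<and> i \<le> k then v t else 0)"

definition dext_br :: "nat \<Rightarrow> ((nat + nat \<Rightarrow> 'a::field) \<Rightarrow> (nat + nat \<Rightarrow> 'a) \<Rightarrow> (nat + nat \<Rightarrow> 'a))
    \<Rightarrow> ((nat + nat \<Rightarrow> 'a) \<Rightarrow> (nat + nat \<Rightarrow> 'a) \<Rightarrow> 'a) \<Rightarrow> ((nat + nat \<Rightarrow> 'a) \<Rightarrow> (nat + nat \<Rightarrow> 'a))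
    \<Rightarrow> (nat + nat \<Rightarrow> 'a) \<Rightarrow> (nat + nat \<Rightarrow> 'a) \<Rightarrow> (nat + nat \<Rightarrow> 'a)" where
  "dext_br k br f d x y =
     (let l = x (Inl (Suc k)); l' = y (Inl (Suc k)); a = proj k x; a' = proj k y
      in sc l (d a') - sc l' (d a) + br a a' + sc (f (d a) a') (dvec (Suc k)))"

definition dext_f :: "nat \<Rightarrow> ((nat + nat \<Rightarrow> 'a::field) \<Rightarrow> (nat + nat \<Rightarrow> 'a) \<Rightarrow> 'a)
    \<Rightarrow> (nat + nat \<Rightarrow> 'a) \<Rightarrow> (nat + nat \<Rightarrow> 'a) \<Rightarrow> 'a" where
  "dext_f k f x y = x (Inl (Suc k)) * y (Inr (Suc k)) + y (Inl (Suc k)) * x (Inr (Suc k))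
                    + f (proj k x) (proj k y)"

fun chain_br :: "(nat \<Rightarrow> (nat + nat \<Rightarrow> 'a::field) \<Rightarrow> (nat + nat \<Rightarrow> 'a)) \<Rightarrow> nat
     \<Rightarrow> (nat + nat \<Rightarrow> 'a) \<Rightarrow> (nat + nat \<Rightarrow> 'a) \<Rightarrow> (nat + nat \<Rightarrow> 'a)"
and chain_f :: "(nat \<Rightarrow> (nat + nat \<Rightarrow> 'a::field) \<Rightarrow> (nat + nat \<Rightarrow> 'a)) \<Rightarrow> nat
     \<Rightarrow> (nat + nat \<Rightarrow> 'a) \<Rightarrow> (nat + nat \<Rightarrow> 'a) \<Rightarrow> 'a" where
  "chain_br d 0 = (\<lambda>x y. 0)"
| "chain_br d (Suc k) = dext_br k (chain_br d k) (chain_f d k) (d k)"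
| "chain_f d 0 = (\<lambda>x y. 0)"
| "chain_f d (Suc k) = dext_f k (chain_f d k)"

definition is_chain :: "nat \<Rightarrow> (nat \<Rightarrow> (nat + nat \<Rightarrow> 'a::field) \<Rightarrow> (nat + nat \<Rightarrow> 'a)) \<Rightarrow> bool" where
  "is_chain n d \<longleftrightarrow> (\<forall>k<n.
     (\<forall>x\<in>Acar k. d k x \<in> Acar k) \<and>
     (\<forall>x\<in>Acar k. \<forall>y\<in>Acar k. \<forall>a. d k (x + y) = d k x + d k y \<and> d k (sc a x) = sc a (d k x)) \<and>
     (\<forall>x\<in>Acar k. \<forall>y\<in>Acar k. chain_f d k (d k x) y + chain_f d k x (d k y) = 0) \<and>
     (\<forall>x\<in>Acar k. \<forall>y\<in>Acar k.
        d k (chain_br d k x y) = chain_br d k (d k x) y + chain_br d k x (d k y)))"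

definition NNP :: "nat \<Rightarrow> (nat \<Rightarrow> (nat + nat \<Rightarrow> 'a::field) \<Rightarrow> (nat + nat \<Rightarrow> 'a)) \<Rightarrow> bool" where
  "NNP n d \<longleftrightarrow> (\<exists>k<n. \<exists>x\<in>Acar k. d k x \<noteq> 0)"

definition TwoSP :: "nat \<Rightarrow> (nat \<Rightarrow> (nat + nat \<Rightarrow> 'a::field) \<Rightarrow> (nat + nat \<Rightarrow> 'a)) \<Rightarrow> bool" where
  "TwoSP n d \<longleftrightarrow> (\<forall>k. 1 \<le> k \<and> k < n \<longrightarrow>
     (\<forall>x\<in>Acar k. d k x \<in> A2car k) \<and> (\<forall>x\<in>A2car k. d k x = 0))"

text \<open>The specific maps d_{i-1} (here d k with k = i-1): d_k(b_j^*) = 0 and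
d_k(b_j) = sum_{m=1..k} c_{(k+1) j m} b_m^* for j <= k, extended linearly.\<close>

definition dmap :: "(nat \<Rightarrow> nat \<Rightarrow> nat \<Rightarrow> 'a::field) \<Rightarrow> nat \<Rightarrow> (nat + nat \<Rightarrow> 'a) \<Rightarrow> (nat + nat \<Rightarrow> 'a)" where
  "dmap c k v = (\<lambda>t. case t of Inl _ \<Rightarrow> 0
      | Inr m \<Rightarrow> if 1 \<le> m \<and> m \<le> k then (\<Sum>j=1..k. v (Inl j) * c (Suc k) j m) else 0)"

text \<open>An n x n matrix is a function row => column => entry on indices 1..n.\<close>

definition n_quadratic_family :: "nat \<Rightarrow> (nat \<Rightarrow> nat \<Rightarrow> nat \<Rightarrow> 'a::field) \<Rightarrow> bool" where
  "n_quadratic_family n M \<longleftrightarrow> (\<forall>i\<in>{1..n}.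
     (\<forall>k\<in>{1..n}. \<forall>j\<in>{1..n}. M i k j = - M i j k) \<and>
     (\<forall>k\<in>{1..n}. M i k i = 0) \<and>
     (\<forall>j\<in>{1..n}. i < j \<longrightarrow> (\<forall>k\<in>{1..n}. M i k j = - M j k i)))"

definition non_null_family :: "nat \<Rightarrow> (nat \<Rightarrow> nat \<Rightarrow> nat \<Rightarrow> 'a::field) \<Rightarrow> bool" where
  "non_null_family n M \<longleftrightarrow> (\<exists>i\<in>{1..n}. \<exists>k\<in>{1..n}. \<exists>j\<in>{1..n}. M i k j \<noteq> 0)"

text \<open>The quadratic algebra defined by the family, with v_i = Inl i, z_i = Inr i,
m_ijk = (k,j) entry of M_i; [v_i,v_j] = sum_k m_ijk z_k, z central.\<close>

definition qa_br :: "nat \<Rightarrow> (nat \<Rightarrow> nat \<Rightarrow> nat \<Rightarrow> 'a::field) \<Rightarrow> (nat + nat \<Rightarrow> 'a) \<Rightarrow> (nat + nat \<Rightarrow> 'a) \<Rightarrow> (nat + nat \<Rightarrow> 'a)" where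
  "qa_br n M v u = (\<lambda>t. case t of Inl _ \<Rightarrow> 0
      | Inr k \<Rightarrow> if 1 \<le> k \<and> k \<le> n then (\<Sum>i=1..n. \<Sum>j=1..n. v (Inl i) * u (Inl j) * M i k j) else 0)"

definition qa_form :: "nat \<Rightarrow> (nat + nat \<Rightarrow> 'a::field) \<Rightarrow> (nat + nat \<Rightarrow> 'a) \<Rightarrow> 'a" where
  "qa_form n v u = (\<Sum>i=1..n. \<Sum>j=1..n. (if i = j then 1 else 0) * (v (Inl i) * u (Inr j) + v (Inr j) * u (Inl i)))"

end

theory Submission
  imports Defs
begin

text \<open>
  Each of (a)-(d) says that the structure constants c, restricted to indices in {1..n},
  are alternating and not identically zero.  In (a), skew-symmetry of the bracket is
  skew-symmetry of c in its first two indices and invariance of phi is skew-symmetry in the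
  last two, while Jacobi and 2-step nilpotency are automatic since the bracket takes values
  in B^* and vanishes on B^*; (b) and (d) impose the same two symmetries directly.  For (c),
  the bracket built by the chain is computed in closed form: it only uses the constants
  c p j m whose first index p is the largest one, extended by skew-symmetry.  The derivation
  d_k is f_k-skew-symmetric iff these are skew in j, m, and asking the chain to reproduce
  the bracket of L forces c to coincide with this alternating extension of itself.
  Characteristic zero is needed to see that alternating constants with a repeated index
  vanish.
\<close>

section \<open>Alternating structure constants\<close>

definition alternating_coeffs :: "nat \<Rightarrow> (nat \<Rightarrow> nat \<Rightarrow> nat \<Rightarrow> 'a::field) \<Rightarrow> bool" where
  "alternating_coeffs n c \<longleftrightarrow>
     (\<forall>i\<in>{1..n}. \<forall>j\<in>{1..n}. \<forall>k\<in>{1..n}. c i j k = - c j i k \<and> c i j k = c j k i)"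

definition nonzero_coeffs :: "nat \<Rightarrow> (nat \<Rightarrow> nat \<Rightarrow> nat \<Rightarrow> 'a::field) \<Rightarrow> bool" where
  "nonzero_coeffs n c \<longleftrightarrow> (\<exists>i\<in>{1..n}. \<exists>j\<in>{1..n}. \<exists>k\<in>{1..n}. c i j k \<noteq> 0)"

lemma alternating_coeffs_iff:
  "alternating_coeffs n c \<longleftrightarrow>
     (\<forall>i\<in>{1..n}. \<forall>j\<in>{1..n}. \<forall>k\<in>{1..n}. c i j k = - c j i k) \<and>
     (\<forall>i\<in>{1..n}. \<forall>j\<in>{1..n}. \<forall>k\<in>{1..n}. c i j k = - c i k j)"
    (is "_ \<longleftrightarrow> ?swap12 \<and> ?swap23")
proof
  assume alt: "alternating_coeffs n c"
  have "c i j k = - c i k j" if "i \<in> {1..n}" "j \<in> {1..n}" "k \<in> {1..n}" for i j k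
  proof -
    have "c i j k = c j k i" using alt that unfolding alternating_coeffs_def by blast
    also have "\<dots> = - c k j i" using alt that unfolding alternating_coeffs_def by (metis minus_minus)
    also have "\<dots> = - c i k j" using alt that unfolding alternating_coeffs_def by metis
    finally show ?thesis .
  qed
  with alt show "?swap12 \<and> ?swap23" unfolding alternating_coeffs_def by blast
next
  assume swaps: "?swap12 \<and> ?swap23"
  have "c i j k = c j k i" if "i \<in> {1..n}" "j \<in> {1..n}" "k \<in> {1..n}" for i j k
  proof -
    have "c i j k = - c j i k" using swaps that by blast
    also have "\<dots> = c j k i" using swaps that by (metis minus_minus)
    finally show ?thesis .
  qed
  with swaps show "alternating_coeffs n c" unfolding alternating_coeffs_def by blast
qed

lemma
  assumes "alternating_coeffs n c" "i \<in> {1..n}" "j \<in> {1..n}" "k \<in> {1..n}"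
  shows alternating_coeffs_swap12: "c i j k = - c j i k"
    and alternating_coeffs_swap23: "c i j k = - c i k j"
    and alternating_coeffs_rotate: "c i j k = c j k i"
proof -
  show "c i j k = - c j i k" "c i j k = c j k i"
    using assms unfolding alternating_coeffs_def by blast+
  show "c i j k = - c i k j"
    using assms unfolding alternating_coeffs_iff by blast
qed

lemma self_eq_neg_iff: "(a::'a::field_char_0) = - a \<longleftrightarrow> a = 0"
  by (simp add: eq_neg_iff_add_eq_0)

lemma
  fixes c :: "nat \<Rightarrow> nat \<Rightarrow> nat \<Rightarrow> 'a::field_char_0"
  assumes "alternating_coeffs n c" "i \<in> {1..n}" "k \<in> {1..n}"
  shows alternating_coeffs_repeat12: "c i i k = 0"
    and alternating_coeffs_repeat23: "c k i i = 0"
  using alternating_coeffs_swap12[OF assms(1,2,2,3)] alternating_coeffs_swap23[OF assms(1,3,2,2)]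
  by (simp_all only: self_eq_neg_iff)

lemma alternating_coeffs_cong:
  "(\<And>i j k. i \<in> {1..n} \<Longrightarrow> j \<in> {1..n} \<Longrightarrow> k \<in> {1..n} \<Longrightarrow> c i j k = c' i j k) \<Longrightarrow>
    alternating_coeffs n c \<longleftrightarrow> alternating_coeffs n c'"
  by (simp add: alternating_coeffs_def)

lemma nonzero_coeffs_cong:
  "(\<And>i j k. i \<in> {1..n} \<Longrightarrow> j \<in> {1..n} \<Longrightarrow> k \<in> {1..n} \<Longrightarrow> c i j k = c' i j k) \<Longrightarrow>
    nonzero_coeffs n c \<longleftrightarrow> nonzero_coeffs n c'"
  by (simp add: nonzero_coeffs_def)

section \<open>The cocycle w\<close>

lemma wfun_cong:
  assumes "\<And>i j k. i \<in> {1..n} \<Longrightarrow> j \<in> {1..n} \<Longrightarrow> k \<in> {1..n} \<Longrightarrow> c i j k = c' i j k"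
  shows "wfun c n = wfun c' n"
  using assms by (auto simp: wfun_def fun_eq_iff intro!: sum.cong)

lemma wfun_swap12: "wfun c n y x z = wfun (\<lambda>i j k. c j i k) n x y z"
  unfolding wfun_def by (subst sum.swap) (simp add: mult_ac)

lemma wfun_swap23: "wfun c n x z y = wfun (\<lambda>i j k. c i k j) n x y z"
  unfolding wfun_def by (rule sum.cong[OF refl], subst sum.swap) (simp add: mult_ac)

lemma wfun_rotate: "wfun c n y z x = wfun (\<lambda>i j k. c j k i) n x y z"
  using wfun_swap23[of c n y z x] wfun_swap12[of "\<lambda>i j k. c i k j" n y x z] by simp

lemma wfun_uminus_coeffs: "wfun (\<lambda>i j k. - c i j k) n x y z = - wfun c n x y z"
  by (simp add: wfun_def sum_negf)

lemmas if_distrib_times = if_distrib[where f="\<lambda>z. z * _"] if_distrib[where f="\<lambda>z. _ * z"]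

lemma wfun_Bbasis_right:
  "m \<in> {1..n} \<Longrightarrow> wfun c n x y (Bbasis m) = (\<Sum>i=1..n. \<Sum>j=1..n. x i * y j * c i j m)"
  unfolding wfun_def Bbasis_def
  by (simp add: if_distrib_times cong: if_cong)

lemma wfun_Bbasis:
  "i \<in> {1..n} \<Longrightarrow> j \<in> {1..n} \<Longrightarrow> k \<in> {1..n} \<Longrightarrow> wfun c n (Bbasis i) (Bbasis j) (Bbasis k) = c i j k"
  using wfun_Bbasis_right[of k n c "Bbasis i" "Bbasis j"] unfolding Bbasis_def
  by (simp add: if_distrib_times sum.If_cases cong: if_cong)

lemma Bbasis_in_Bcar: "i \<in> {1..n} \<Longrightarrow> Bbasis i \<in> Bcar n"
  by (auto simp: Bbasis_def Bcar_def)

lemma wfun_eq_iff: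
  "(\<forall>x\<in>Bcar n. \<forall>y\<in>Bcar n. \<forall>z\<in>Bcar n. wfun c n x y z = wfun c' n x y z) \<longleftrightarrow>
     (\<forall>i\<in>{1..n}. \<forall>j\<in>{1..n}. \<forall>k\<in>{1..n}. c i j k = c' i j k)"
proof
  assume equal_w: "\<forall>x\<in>Bcar n. \<forall>y\<in>Bcar n. \<forall>z\<in>Bcar n. wfun c n x y z = wfun c' n x y z"
  show "\<forall>i\<in>{1..n}. \<forall>j\<in>{1..n}. \<forall>k\<in>{1..n}. c i j k = c' i j k"
  proof (intro ballI)
    fix i j k assume ijk: "i \<in> {1..n}" "j \<in> {1..n}" "k \<in> {1..n}"
    with equal_w have
        "wfun c n (Bbasis i) (Bbasis j) (Bbasis k) = wfun c' n (Bbasis i) (Bbasis j) (Bbasis k)"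
      using Bbasis_in_Bcar by blast
    with ijk show "c i j k = c' i j k"
      by (metis wfun_Bbasis)
  qed
next
  assume "\<forall>i\<in>{1..n}. \<forall>j\<in>{1..n}. \<forall>k\<in>{1..n}. c i j k = c' i j k"
  then show "\<forall>x\<in>Bcar n. \<forall>y\<in>Bcar n. \<forall>z\<in>Bcar n. wfun c n x y z = wfun c' n x y z"
    using wfun_cong[of n c c'] by simp
qed

lemma nonzero_w_wfun_iff: "nonzero_w n (wfun c n) \<longleftrightarrow> nonzero_coeffs n c"
proof
  assume nonzero_w: "nonzero_w n (wfun c n)"
  show "nonzero_coeffs n c"
  proof (rule ccontr)
    assume "\<not> nonzero_coeffs n c"
    then have "wfun c n = wfun (\<lambda>_ _ _. 0) n"
      by (intro wfun_cong) (auto simp: nonzero_coeffs_def)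
    with nonzero_w show False
      by (simp add: nonzero_w_def wfun_def)
  qed
next
  assume "nonzero_coeffs n c"
  then obtain i j k where "i \<in> {1..n}" "j \<in> {1..n}" "k \<in> {1..n}" "c i j k \<noteq> 0"
    unfolding nonzero_coeffs_def by blast
  then show "nonzero_w n (wfun c n)"
    unfolding nonzero_w_def by (metis Bbasis_in_Bcar wfun_Bbasis)
qed

lemma cocycle_abelian_wfun_iff:
  "cocycle_abelian n (wfun c n) \<longleftrightarrow> (\<forall>i\<in>{1..n}. \<forall>j\<in>{1..n}. \<forall>k\<in>{1..n}. c i j k = - c j i k)"
proof -
  have linear: "wfun c n (x + u) y z = wfun c n x y z + wfun c n u y z"
    "wfun c n x (y + u) z = wfun c n x y z + wfun c n x u z"
    "wfun c n x y (z + u) = wfun c n x y z + wfun c n x y u"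
    "wfun c n (sc a x) y z = a * wfun c n x y z"
    "wfun c n x (sc a y) z = a * wfun c n x y z"
    "wfun c n x y (sc a z) = a * wfun c n x y z" for x y z u a
    by (simp_all add: wfun_def sc_def algebra_simps sum.distrib sum_distrib_left)
  have swap: "- wfun c n y x z = wfun (\<lambda>i j k. - c j i k) n x y z" for x y z
    by (simp add: wfun_uminus_coeffs wfun_swap12[of c n y x z])
  have "cocycle_abelian n (wfun c n) \<longleftrightarrow>
      (\<forall>x\<in>Bcar n. \<forall>y\<in>Bcar n. \<forall>z\<in>Bcar n. wfun c n x y z = wfun (\<lambda>i j k. - c j i k) n x y z)"
    unfolding cocycle_abelian_def swap by (simp add: linear)
  also have "\<dots> \<longleftrightarrow> (\<forall>i\<in>{1..n}. \<forall>j\<in>{1..n}. \<forall>k\<in>{1..n}. c i j k = - c j i k)"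
    by (rule wfun_eq_iff)
  finally show ?thesis .
qed

lemma cyclic_iff_rotate:
  "(\<forall>x\<in>S. \<forall>y\<in>S. \<forall>z\<in>S. w x y z = w z x y \<and> w z x y = w y z x) \<longleftrightarrow>
     (\<forall>x\<in>S. \<forall>y\<in>S. \<forall>z\<in>S. w x y z = w y z x)"
proof (intro iffI ballI conjI)
  fix x y z assume "x \<in> S" "y \<in> S" "z \<in> S"
  {
    assume "\<forall>x\<in>S. \<forall>y\<in>S. \<forall>z\<in>S. w x y z = w z x y \<and> w z x y = w y z x"
    with \<open>x \<in> S\<close> \<open>y \<in> S\<close> \<open>z \<in> S\<close> have "w x y z = w z x y" "w z x y = w y z x" by blast+
    then show "w x y z = w y z x" by (rule trans)
  next
    assume rotate: "\<forall>x\<in>S. \<forall>y\<in>S. \<forall>z\<in>S. w x y z = w y z x"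
    with \<open>x \<in> S\<close> \<open>y \<in> S\<close> \<open>z \<in> S\<close> have "w z x y = w x y z" "w x y z = w y z x" by blast+
    then show "w x y z = w z x y" "w z x y = w y z x" by simp_all
  }
qed

lemma cyclic_cocycle_wfun_iff: "cyclic_cocycle n (wfun c n) \<longleftrightarrow> alternating_coeffs n c"
proof -
  have "(\<forall>x\<in>Bcar n. \<forall>y\<in>Bcar n. \<forall>z\<in>Bcar n.
          wfun c n x y z = wfun c n z x y \<and> wfun c n z x y = wfun c n y z x)
      \<longleftrightarrow> (\<forall>x\<in>Bcar n. \<forall>y\<in>Bcar n. \<forall>z\<in>Bcar n. wfun c n x y z = wfun (\<lambda>i j k. c j k i) n x y z)"
    unfolding cyclic_iff_rotate wfun_rotate[of c n, symmetric] ..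
  also have "\<dots> \<longleftrightarrow> (\<forall>i\<in>{1..n}. \<forall>j\<in>{1..n}. \<forall>k\<in>{1..n}. c i j k = c j k i)"
    by (rule wfun_eq_iff)
  finally show ?thesis
    unfolding cyclic_cocycle_def cocycle_abelian_wfun_iff alternating_coeffs_def by blast
qed

theorem cyclic_cocycle_iff:
  "nonzero_w n (wfun c n) \<and> cyclic_cocycle n (wfun c n) \<longleftrightarrow>
    alternating_coeffs n c \<and> nonzero_coeffs n c"
  by (auto simp: nonzero_w_wfun_iff cyclic_cocycle_wfun_iff)

section \<open>Brackets with prescribed structure constants\<close>

text \<open>[b_i, b_j] = (SUM m. A i j m b_m^*); the brackets in (a), (b) and (d) all have this form.\<close>

definition coeff_br :: "nat \<Rightarrow> (nat \<Rightarrow> nat \<Rightarrow> nat \<Rightarrow> 'a::field)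
    \<Rightarrow> (nat + nat \<Rightarrow> 'a) \<Rightarrow> (nat + nat \<Rightarrow> 'a) \<Rightarrow> (nat + nat \<Rightarrow> 'a)" where
  "coeff_br n A x y = (\<lambda>t. case t of Inl _ \<Rightarrow> 0
     | Inr m \<Rightarrow> if 1 \<le> m \<and> m \<le> n then (\<Sum>i=1..n. \<Sum>j=1..n. x (Inl i) * y (Inl j) * A i j m) else 0)"

lemma coeff_br_Inl [simp]: "coeff_br n A x y (Inl i) = 0"
  by (simp add: coeff_br_def)

lemma coeff_br_Inr:
  "coeff_br n A x y (Inr m) =
     (if 1 \<le> m \<and> m \<le> n then (\<Sum>i=1..n. \<Sum>j=1..n. x (Inl i) * y (Inl j) * A i j m) else 0)"
  by (simp add: coeff_br_def)

lemma Lbr_eq_coeff_br: "Lbr c n = coeff_br n c"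
  by (simp add: Lbr_def coeff_br_def fun_eq_iff)

lemma qa_br_eq_coeff_br: "qa_br n (\<lambda>i k j. c i j k) = coeff_br n c"
  by (simp add: qa_br_def coeff_br_def fun_eq_iff)

lemma Tstar_br_wfun_eq_coeff_br: "Tstar_br n (wfun c n) = coeff_br n c"
  by (simp add: Tstar_br_def coeff_br_def fun_eq_iff wfun_Bbasis_right split: sum.split)

lemma coeff_br_cong:
  assumes "\<And>i j m. i \<in> {1..n} \<Longrightarrow> j \<in> {1..n} \<Longrightarrow> m \<in> {1..n} \<Longrightarrow> A i j m = A' i j m"
  shows "coeff_br n A = coeff_br n A'"
  using assms by (auto simp: coeff_br_def fun_eq_iff split: sum.split intro!: sum.cong)

lemma coeff_br_zero_coeffs: "coeff_br n (\<lambda>_ _ _. 0) = (\<lambda>_ _. 0)"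
  by (simp add: coeff_br_def fun_eq_iff split: sum.split)

lemma coeff_br_in_Acar: "coeff_br n A x y \<in> Acar n"
  by (auto simp: Acar_def coeff_br_Inr)

lemma coeff_br_zero_left: "(\<And>i. x (Inl i) = 0) \<Longrightarrow> coeff_br n A x y = 0"
  by (auto simp: coeff_br_def fun_eq_iff split: sum.split)

lemma coeff_br_zero_right: "(\<And>i. y (Inl i) = 0) \<Longrightarrow> coeff_br n A x y = 0"
  by (auto simp: coeff_br_def fun_eq_iff split: sum.split)

lemma coeff_br_add_left: "coeff_br n A (x + x') y = coeff_br n A x y + coeff_br n A x' y"
  by (auto simp: coeff_br_def fun_eq_iff algebra_simps sum.distrib split: sum.split)

lemma coeff_br_add_right: "coeff_br n A x (y + y') = coeff_br n A x y + coeff_br n A x y'"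
  by (auto simp: coeff_br_def fun_eq_iff algebra_simps sum.distrib split: sum.split)

lemma coeff_br_sc_left: "coeff_br n A (sc a x) y = sc a (coeff_br n A x y)"
  by (auto simp: coeff_br_def sc_def fun_eq_iff sum_distrib_left algebra_simps split: sum.split)

lemma coeff_br_sc_right: "coeff_br n A x (sc a y) = sc a (coeff_br n A x y)"
  by (auto simp: coeff_br_def sc_def fun_eq_iff sum_distrib_left algebra_simps split: sum.split)

lemma bvec_in_Acar: "i \<in> {1..n} \<Longrightarrow> bvec i \<in> Acar n"
  by (auto simp: Acar_def bvec_def)

lemma dvec_in_Acar: "i \<in> {1..n} \<Longrightarrow> dvec i \<in> Acar n"
  by (auto simp: Acar_def dvec_def)

lemma coeff_br_bvec:
  "i \<in> {1..n} \<Longrightarrow> j \<in> {1..n} \<Longrightarrow> m \<in> {1..n} \<Longrightarrow> coeff_br n A (bvec i) (bvec j) (Inr m) = A i j m"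
  unfolding coeff_br_def bvec_def
  by (simp add: if_distrib_times sum.If_cases cong: if_cong)

lemma coeff_br_eq_iff:
  "(\<forall>x\<in>Acar n. \<forall>y\<in>Acar n. coeff_br n A x y = coeff_br n A' x y) \<longleftrightarrow>
     (\<forall>i\<in>{1..n}. \<forall>j\<in>{1..n}. \<forall>m\<in>{1..n}. A i j m = A' i j m)"
proof
  assume equal_br: "\<forall>x\<in>Acar n. \<forall>y\<in>Acar n. coeff_br n A x y = coeff_br n A' x y"
  show "\<forall>i\<in>{1..n}. \<forall>j\<in>{1..n}. \<forall>m\<in>{1..n}. A i j m = A' i j m"
  proof (intro ballI)
    fix i j m assume ijm: "i \<in> {1..n}" "j \<in> {1..n}" "m \<in> {1..n}"
    with equal_br have "coeff_br n A (bvec i) (bvec j) = coeff_br n A' (bvec i) (bvec j)"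
      using bvec_in_Acar by blast
    with ijm show "A i j m = A' i j m"
      by (metis coeff_br_bvec)
  qed
next
  assume "\<forall>i\<in>{1..n}. \<forall>j\<in>{1..n}. \<forall>m\<in>{1..n}. A i j m = A' i j m"
  then show "\<forall>x\<in>Acar n. \<forall>y\<in>Acar n. coeff_br n A x y = coeff_br n A' x y"
    using coeff_br_cong[of n A A'] by simp
qed

lemma coeff_br_nonzero_iff:
  "(\<exists>x\<in>Acar n. \<exists>y\<in>Acar n. coeff_br n A x y \<noteq> 0) \<longleftrightarrow> nonzero_coeffs n A"
proof
  assume nonzero_br: "\<exists>x\<in>Acar n. \<exists>y\<in>Acar n. coeff_br n A x y \<noteq> 0"
  show "nonzero_coeffs n A"
  proof (rule ccontr)
    assume "\<not> nonzero_coeffs n A"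
    then have "coeff_br n A = coeff_br n (\<lambda>_ _ _. 0)"
      by (intro coeff_br_cong) (auto simp: nonzero_coeffs_def)
    with nonzero_br show False
      by (simp add: coeff_br_zero_coeffs zero_fun_def)
  qed
next
  assume "nonzero_coeffs n A"
  then obtain i j m where "i \<in> {1..n}" "j \<in> {1..n}" "m \<in> {1..n}" "A i j m \<noteq> 0"
    unfolding nonzero_coeffs_def by blast
  then have "coeff_br n A (bvec i) (bvec j) \<noteq> 0"
    by (metis coeff_br_bvec zero_fun_apply)
  with \<open>i \<in> {1..n}\<close> \<open>j \<in> {1..n}\<close> show "\<exists>x\<in>Acar n. \<exists>y\<in>Acar n. coeff_br n A x y \<noteq> 0"
    using bvec_in_Acar by blast
qed

section \<open>The form phi\<close>

lemma Lform_bvec_left: "i \<in> {1..n} \<Longrightarrow> Lform n (bvec i) y = y (Inr i)"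
  by (simp add: Lform_def bvec_def if_distrib_times
      cong: if_cong)

lemma Lform_bvec_right: "i \<in> {1..n} \<Longrightarrow> Lform n x (bvec i) = x (Inr i)"
  by (simp add: Lform_def bvec_def if_distrib_times
      cong: if_cong)

lemma Lform_dvec_right: "i \<in> {1..n} \<Longrightarrow> Lform n x (dvec i) = x (Inl i)"
  by (simp add: Lform_def dvec_def if_distrib_times
      cong: if_cong)

lemma Lform_commute: "Lform n x y = Lform n y x"
  by (simp add: Lform_def add.commute)

lemma bilinear_form_on_Lform: "bilinear_form_on V (Lform n)"
  by (simp add: bilinear_form_on_def Lform_def sc_def algebra_simps sum.distrib sum_distrib_left)

lemma Lform_nondegenerate:
  assumes x: "x \<in> Acar n" and orthogonal: "\<forall>y\<in>Acar n. Lform n x y = 0"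
  shows "x = 0"
proof
  fix t
  have "x (Inl i) = 0 \<and> x (Inr i) = 0" for i
  proof (cases "i \<in> {1..n}")
    case True
    then show ?thesis
      using orthogonal dvec_in_Acar bvec_in_Acar Lform_dvec_right Lform_bvec_right by metis
  next
    case False
    then have "i < 1 \<or> n < i" by auto
    with x show ?thesis unfolding Acar_def mem_Collect_eq by blast
  qed
  then show "x t = 0 t"
    by (cases t) simp_all
qed

lemma Lform_coeff_br: "Lform n (coeff_br n A x y) z = wfun A n (x \<circ> Inl) (y \<circ> Inl) (z \<circ> Inl)"
proof -
  have "Lform n (coeff_br n A x y) z =
      (\<Sum>m=1..n. \<Sum>i=1..n. \<Sum>j=1..n. x (Inl i) * y (Inl j) * z (Inl m) * A i j m)"
    unfolding Lform_def
    by (intro sum.cong refl) (simp add: coeff_br_Inr sum_distrib_right sum_distrib_left mult_ac)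
  also have "\<dots> = (\<Sum>i=1..n. \<Sum>m=1..n. \<Sum>j=1..n. x (Inl i) * y (Inl j) * z (Inl m) * A i j m)"
    by (rule sum.swap)
  also have "\<dots> = (\<Sum>i=1..n. \<Sum>j=1..n. \<Sum>m=1..n. x (Inl i) * y (Inl j) * z (Inl m) * A i j m)"
    by (rule sum.cong[OF refl], rule sum.swap)
  finally show ?thesis
    by (simp add: wfun_def)
qed

lemma qB_eq_Lform: "qB n = Lform n"
  by (simp add: qB_def Lform_def fun_eq_iff algebra_simps sum.distrib)

lemma qa_form_eq_Lform: "qa_form n = Lform n"
  by (simp add: qa_form_def Lform_def fun_eq_iff algebra_simps sum.distrib
      if_distrib_times cong: if_cong)

section \<open>Quadratic 2-step nilpotent Lie algebras and quadratic families\<close>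

lemma subspace_c_Acar: "subspace_c (Acar n)"
  by (auto simp: subspace_c_def Acar_def sc_def)

lemma bilinear_map_on_coeff_br: "bilinear_map_on V (coeff_br n A)"
  by (simp add: bilinear_map_on_def coeff_br_add_left coeff_br_add_right
      coeff_br_sc_left coeff_br_sc_right)

lemma lie_algebra_on_coeff_br_iff:
  "lie_algebra_on (Acar n) (coeff_br n A) \<longleftrightarrow> (\<forall>x\<in>Acar n. coeff_br n A x x = 0)"
  by (simp add: lie_algebra_on_def subspace_c_Acar bilinear_map_on_coeff_br coeff_br_in_Acar
      coeff_br_zero_right)

lemma quadratic_lie_algebra_coeff_br_iff:
  "quadratic_lie_algebra (Acar n) (coeff_br n A) (Lform n) \<longleftrightarrow>
     (\<forall>x\<in>Acar n. coeff_br n A x x = 0) \<and>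
     (\<forall>x\<in>Acar n. \<forall>y\<in>Acar n. \<forall>z\<in>Acar n.
        Lform n (coeff_br n A x y) z + Lform n y (coeff_br n A x z) = 0)"
proof -
  have "bilinear_form_on (Acar n) (Lform n)"
    and "\<forall>x\<in>Acar n. \<forall>y\<in>Acar n. Lform n x y = Lform n y x"
    and "\<forall>x\<in>Acar n. (\<forall>y\<in>Acar n. Lform n x y = 0) \<longrightarrow> x = 0"
    using bilinear_form_on_Lform Lform_commute Lform_nondegenerate by blast+
  then show ?thesis
    unfolding quadratic_lie_algebra_def lie_algebra_on_coeff_br_iff by meson
qed

lemma two_step_nilpotent_coeff_br_iff:
  "two_step_nilpotent (Acar n) (coeff_br n A) \<longleftrightarrow> nonzero_coeffs n A"
  by (simp add: two_step_nilpotent_def coeff_br_zero_right coeff_br_nonzero_iff)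

lemma skew_quadratic_form_zero:
  fixes A :: "'i \<Rightarrow> 'i \<Rightarrow> 'a::field_char_0"
  assumes skew: "\<And>i j. i \<in> S \<Longrightarrow> j \<in> S \<Longrightarrow> A j i = - A i j"
  shows "(\<Sum>i\<in>S. \<Sum>j\<in>S. x i * x j * A i j) = 0"
proof -
  let ?Q = "\<Sum>i\<in>S. \<Sum>j\<in>S. x i * x j * A i j"
  have swapped_term: "x j * x i * A j i = - (x i * x j * A i j)" if "i \<in> S" "j \<in> S" for i j
    using skew[OF that] by (simp add: mult_ac)
  have "?Q = (\<Sum>j\<in>S. \<Sum>i\<in>S. x i * x j * A i j)"
    by (rule sum.swap)
  also have "\<dots> = - ?Q"
    unfolding sum_negf[symmetric] by (intro sum.cong refl) (blast intro: swapped_term)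
  finally show ?thesis
    by (simp only: self_eq_neg_iff)
qed

lemma coeff_br_self_zero_iff:
  fixes A :: "nat \<Rightarrow> nat \<Rightarrow> nat \<Rightarrow> 'a::field_char_0"
  shows "(\<forall>x\<in>Acar n. coeff_br n A x x = 0) \<longleftrightarrow>
    (\<forall>i\<in>{1..n}. \<forall>j\<in>{1..n}. \<forall>m\<in>{1..n}. A i j m = - A j i m)"
proof
  assume self_zero: "\<forall>x\<in>Acar n. coeff_br n A x x = 0"
  have diagonal: "A i i m = 0" if "i \<in> {1..n}" "m \<in> {1..n}" for i m
  proof -
    have "coeff_br n A (bvec i) (bvec i) = 0"
      using self_zero bvec_in_Acar[OF that(1)] by blast
    then show ?thesis
      using coeff_br_bvec[OF that(1,1,2), of A] by simp
  qed
  show "\<forall>i\<in>{1..n}. \<forall>j\<in>{1..n}. \<forall>m\<in>{1..n}. A i j m = - A j i m"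
  proof (intro ballI)
    fix i j m assume ijm: "i \<in> {1..n}" "j \<in> {1..n}" "m \<in> {1..n}"
    have "bvec i + bvec j \<in> Acar n"
      using ijm by (auto simp: Acar_def bvec_def)
    with self_zero have "coeff_br n A (bvec i + bvec j) (bvec i + bvec j) = 0"
      by blast
    then have "coeff_br n A (bvec i + bvec j) (bvec i + bvec j) (Inr m) = 0"
      by simp
    then have "A i i m + A j i m + (A i j m + A j j m) = 0"
      using ijm by (simp add: coeff_br_add_left coeff_br_add_right coeff_br_bvec)
    with diagonal ijm show "A i j m = - A j i m"
      by (simp add: eq_neg_iff_add_eq_0 add.commute)
  qed
next
  assume skew: "\<forall>i\<in>{1..n}. \<forall>j\<in>{1..n}. \<forall>m\<in>{1..n}. A i j m = - A j i m"
  show "\<forall>x\<in>Acar n. coeff_br n A x x = 0"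
  proof (intro ballI ext)
    fix x :: "nat + nat \<Rightarrow> 'a" and t
    have "(\<Sum>i=1..n. \<Sum>j=1..n. x (Inl i) * x (Inl j) * A i j m) = 0" if "m \<in> {1..n}" for m
      by (rule skew_quadratic_form_zero) (use skew that in blast)
    then show "coeff_br n A x x t = 0 t"
      by (cases t) (auto simp: coeff_br_Inr)
  qed
qed

lemma Lform_invariant_iff:
  "(\<forall>x\<in>Acar n. \<forall>y\<in>Acar n. \<forall>z\<in>Acar n.
      Lform n (coeff_br n A x y) z + Lform n y (coeff_br n A x z) = 0) \<longleftrightarrow>
   (\<forall>i\<in>{1..n}. \<forall>j\<in>{1..n}. \<forall>m\<in>{1..n}. A i j m = - A i m j)"
proof
  assume invariant: "\<forall>x\<in>Acar n. \<forall>y\<in>Acar n. \<forall>z\<in>Acar n.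
      Lform n (coeff_br n A x y) z + Lform n y (coeff_br n A x z) = 0"
  show "\<forall>i\<in>{1..n}. \<forall>j\<in>{1..n}. \<forall>m\<in>{1..n}. A i j m = - A i m j"
  proof (intro ballI)
    fix i j m assume ijm: "i \<in> {1..n}" "j \<in> {1..n}" "m \<in> {1..n}"
    then have "Lform n (coeff_br n A (bvec i) (bvec j)) (bvec m) +
        Lform n (bvec j) (coeff_br n A (bvec i) (bvec m)) = 0"
      using invariant bvec_in_Acar by blast
    with ijm show "A i j m = - A i m j"
      by (simp add: Lform_bvec_left Lform_bvec_right coeff_br_bvec eq_neg_iff_add_eq_0)
  qed
next
  assume skew: "\<forall>i\<in>{1..n}. \<forall>j\<in>{1..n}. \<forall>m\<in>{1..n}. A i j m = - A i m j"
  have coeffs: "wfun (\<lambda>i j m. A i m j) n = wfun (\<lambda>i j m. - A i j m) n"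
    by (rule wfun_cong) (use skew in blast)
  have "Lform n y (coeff_br n A x z) = - Lform n (coeff_br n A x y) z" for x y z
  proof -
    have "Lform n y (coeff_br n A x z) = wfun A n (x \<circ> Inl) (z \<circ> Inl) (y \<circ> Inl)"
      by (subst Lform_commute) (rule Lform_coeff_br)
    also have "\<dots> = wfun (\<lambda>i j m. A i m j) n (x \<circ> Inl) (y \<circ> Inl) (z \<circ> Inl)"
      by (rule wfun_swap23)
    also have "\<dots> = wfun (\<lambda>i j m. - A i j m) n (x \<circ> Inl) (y \<circ> Inl) (z \<circ> Inl)"
      by (simp only: coeffs)
    also have "\<dots> = - Lform n (coeff_br n A x y) z"
      by (simp add: wfun_uminus_coeffs Lform_coeff_br)
    finally show ?thesis .
  qed
  then show "\<forall>x\<in>Acar n. \<forall>y\<in>Acar n. \<forall>z\<in>Acar n.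
      Lform n (coeff_br n A x y) z + Lform n y (coeff_br n A x z) = 0"
    by simp
qed

theorem quadratic_two_step_nilpotent_iff:
  fixes c :: "nat \<Rightarrow> nat \<Rightarrow> nat \<Rightarrow> 'a::field_char_0"
  shows "quadratic_lie_algebra (Acar n) (coeff_br n c) (Lform n) \<and>
      two_step_nilpotent (Acar n) (coeff_br n c) \<longleftrightarrow>
    alternating_coeffs n c \<and> nonzero_coeffs n c"
  by (simp add: quadratic_lie_algebra_coeff_br_iff coeff_br_self_zero_iff Lform_invariant_iff
      two_step_nilpotent_coeff_br_iff alternating_coeffs_iff)

lemma n_quadratic_family_iff:
  fixes c :: "nat \<Rightarrow> nat \<Rightarrow> nat \<Rightarrow> 'a::field_char_0"
  shows "n_quadratic_family n (\<lambda>i k j. c i j k) \<longleftrightarrow> alternating_coeffs n c"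
proof
  assume family: "n_quadratic_family n (\<lambda>i k j. c i j k)"
  have swap23: "c i j k = - c i k j" if "i \<in> {1..n}" "j \<in> {1..n}" "k \<in> {1..n}" for i j k
    using family that unfolding n_quadratic_family_def by blast
  have swap12: "c i j k = - c j i k" if ijk: "i \<in> {1..n}" "j \<in> {1..n}" "k \<in> {1..n}" for i j k
  proof -
    consider "i < j" | "i = j" | "j < i" by linarith
    then show ?thesis
    proof cases
      case 1
      then show ?thesis using family ijk unfolding n_quadratic_family_def by blast
    next
      case 2
      have "c i i k = 0" using family ijk unfolding n_quadratic_family_def by blast
      with 2 show ?thesis by simp
    next
      case 3
      then have "c j i k = - c i j k" using family ijk unfolding n_quadratic_family_def by blast
      then show ?thesis by simp
    qed
  qed
  show "alternating_coeffs n c"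
    unfolding alternating_coeffs_iff using swap12 swap23 by blast
next
  assume "alternating_coeffs n c"
  then show "n_quadratic_family n (\<lambda>i k j. c i j k)"
    unfolding n_quadratic_family_def
    using alternating_coeffs_swap12 alternating_coeffs_swap23 alternating_coeffs_repeat12
    by blast
qed

lemma non_null_family_iff: "non_null_family n (\<lambda>i k j. c i j k) \<longleftrightarrow> nonzero_coeffs n c"
  unfolding non_null_family_def nonzero_coeffs_def by blast

section \<open>Chains of one-dimensional double extensions\<close>

text \<open>Structure constants of the bracket built by the chain: c p j m is only read off for p
  the largest index and is extended to the other orderings by skew-symmetry; constants whose
  largest index is repeated are 0.\<close>

definition chain_coeffs :: "(nat \<Rightarrow> nat \<Rightarrow> nat \<Rightarrow> 'a::field) \<Rightarrow> nat \<Rightarrow> nat \<Rightarrow> nat \<Rightarrow> 'a" where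
  "chain_coeffs c i j m =
     (if j < i \<and> m < i then c i j m else 0) - (if i < j \<and> m < j then c j i m else 0)
     + (if i < m \<and> j < m then c m i j else 0)"

text \<open>d_k is f_k-skew-symmetric iff the matrix (c (k+1) j m) with j, m <= k is skew.\<close>

definition skew_lower_blocks :: "nat \<Rightarrow> (nat \<Rightarrow> nat \<Rightarrow> nat \<Rightarrow> 'a::field) \<Rightarrow> bool" where
  "skew_lower_blocks n c \<longleftrightarrow> (\<forall>k<n. \<forall>j\<in>{1..k}. \<forall>m\<in>{1..k}. c (Suc k) j m = - c (Suc k) m j)"

lemma dmap_Inl [simp]: "dmap c k x (Inl i) = 0"
  by (simp add: dmap_def)

lemma dmap_Inr:
  "dmap c k x (Inr m) = (if 1 \<le> m \<and> m \<le> k then (\<Sum>j=1..k. x (Inl j) * c (Suc k) j m) else 0)"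
  by (simp add: dmap_def)

lemma dmap_proj: "dmap c k (proj k x) = dmap c k x"
  by (auto simp: dmap_def proj_def fun_eq_iff split: sum.split intro!: sum.cong)

lemma coeff_br_proj: "coeff_br k A (proj k x) (proj k y) = coeff_br k A x y"
  by (auto simp: coeff_br_def proj_def fun_eq_iff split: sum.split intro!: sum.cong)

lemma Lform_proj_left: "Lform k (proj k x) y = Lform k x y"
  by (auto simp: Lform_def proj_def intro!: sum.cong)

lemma Lform_proj_right: "Lform k x (proj k y) = Lform k x y"
  by (auto simp: Lform_def proj_def intro!: sum.cong)

lemma chain_f_eq_Lform: "chain_f d k = Lform k"
proof (induction k)
  case 0
  show ?case by (simp add: Lform_def fun_eq_iff)
next
  case (Suc k)
  show ?case
    by (simp add: Suc dext_f_def Lform_proj_left Lform_proj_right fun_eq_iff)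
      (simp add: Lform_def algebra_simps)
qed

lemma coeff_br_Suc_Inr:
  "coeff_br (Suc k) A x y (Inr m) =
     (if 1 \<le> m \<and> m \<le> Suc k then
        (\<Sum>i=1..k. \<Sum>j=1..k. x (Inl i) * y (Inl j) * A i j m)
        + (\<Sum>i=1..k. x (Inl i) * y (Inl (Suc k)) * A i (Suc k) m)
        + (\<Sum>j=1..k. x (Inl (Suc k)) * y (Inl j) * A (Suc k) j m)
        + x (Inl (Suc k)) * y (Inl (Suc k)) * A (Suc k) (Suc k) m
      else 0)"
  by (simp add: coeff_br_Inr sum.distrib algebra_simps)

lemma Lform_dmap_left:
  "Lform k (dmap c k x) y = (\<Sum>j=1..k. \<Sum>m=1..k. x (Inl j) * y (Inl m) * c (Suc k) j m)"
proof -
  have "Lform k (dmap c k x) y = (\<Sum>m=1..k. \<Sum>j=1..k. x (Inl j) * y (Inl m) * c (Suc k) j m)"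
    unfolding Lform_def by (intro sum.cong refl) (simp add: dmap_Inr sum_distrib_left mult_ac)
  also have "\<dots> = (\<Sum>j=1..k. \<Sum>m=1..k. x (Inl j) * y (Inl m) * c (Suc k) j m)"
    by (rule sum.swap)
  finally show ?thesis .
qed

lemma coeff_br_chain_coeffs_Suc_below:
  assumes "1 \<le> m" "m \<le> k"
  shows "coeff_br (Suc k) (chain_coeffs c) x y (Inr m) =
    x (Inl (Suc k)) * dmap c k y (Inr m) - y (Inl (Suc k)) * dmap c k x (Inr m)
    + coeff_br k (chain_coeffs c) x y (Inr m)"
proof -
  let ?E = "chain_coeffs c" and ?l = "x (Inl (Suc k))" and ?l' = "y (Inl (Suc k))"
  have E: "?E i (Suc k) m = - c (Suc k) i m" "?E (Suc k) i m = c (Suc k) i m"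
    if "i \<in> {1..k}" for i
    using assms that by (simp_all add: chain_coeffs_def)
  have E_top: "?E (Suc k) (Suc k) m = 0"
    using assms by (simp add: chain_coeffs_def)
  have "coeff_br (Suc k) ?E x y (Inr m) =
      (\<Sum>i=1..k. \<Sum>j=1..k. x (Inl i) * y (Inl j) * ?E i j m)
      + (\<Sum>i=1..k. x (Inl i) * ?l' * ?E i (Suc k) m)
      + (\<Sum>j=1..k. ?l * y (Inl j) * ?E (Suc k) j m)
      + ?l * ?l' * ?E (Suc k) (Suc k) m"
    using assms by (simp only: coeff_br_Suc_Inr) simp
  also have "\<dots> = ?l * (\<Sum>j=1..k. y (Inl j) * c (Suc k) j m)
      - ?l' * (\<Sum>i=1..k. x (Inl i) * c (Suc k) i m) + coeff_br k ?E x y (Inr m)"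
    using assms by (simp add: E E_top coeff_br_Inr sum_distrib_left sum_negf mult_ac)
  also have "\<dots> = ?l * dmap c k y (Inr m) - ?l' * dmap c k x (Inr m) + coeff_br k ?E x y (Inr m)"
    using assms by (simp add: dmap_Inr)
  finally show ?thesis .
qed

lemma coeff_br_chain_coeffs_Suc_top:
  "coeff_br (Suc k) (chain_coeffs c) x y (Inr (Suc k)) = Lform k (dmap c k x) y"
proof -
  let ?E = "chain_coeffs c" and ?l = "x (Inl (Suc k))" and ?l' = "y (Inl (Suc k))"
  have E: "?E i j (Suc k) = c (Suc k) i j" if "i \<in> {1..k}" "j \<in> {1..k}" for i j
    using that by (simp add: chain_coeffs_def)
  have E_zero: "?E i (Suc k) (Suc k) = 0" "?E (Suc k) i (Suc k) = 0" if "i \<in> {1..k}" for i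
    using that by (simp_all add: chain_coeffs_def)
  have E_top: "?E (Suc k) (Suc k) (Suc k) = 0"
    by (simp add: chain_coeffs_def)
  have "coeff_br (Suc k) ?E x y (Inr (Suc k)) =
      (\<Sum>i=1..k. \<Sum>j=1..k. x (Inl i) * y (Inl j) * ?E i j (Suc k))
      + (\<Sum>i=1..k. x (Inl i) * ?l' * ?E i (Suc k) (Suc k))
      + (\<Sum>j=1..k. ?l * y (Inl j) * ?E (Suc k) j (Suc k))
      + ?l * ?l' * ?E (Suc k) (Suc k) (Suc k)"
    by (simp only: coeff_br_Suc_Inr) simp
  also have "\<dots> = (\<Sum>i=1..k. \<Sum>j=1..k. x (Inl i) * y (Inl j) * c (Suc k) i j)"
    by (simp add: E E_zero E_top)
  also have "\<dots> = Lform k (dmap c k x) y"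
    by (simp add: Lform_dmap_left)
  finally show ?thesis .
qed

lemma chain_br_eq_coeff_br: "chain_br (dmap c) k = coeff_br k (chain_coeffs c)"
proof (induction k)
  case 0
  show ?case by (simp add: coeff_br_def fun_eq_iff split: sum.split)
next
  case (Suc k)
  let ?E = "chain_coeffs c"
  show ?case
  proof (intro ext)
    fix x y :: "nat + nat \<Rightarrow> 'a" and t
    let ?l = "x (Inl (Suc k))" and ?l' = "y (Inl (Suc k))"
    have step: "chain_br (dmap c) (Suc k) x y t =
        ?l * dmap c k y t - ?l' * dmap c k x t + coeff_br k ?E x y t
        + Lform k (dmap c k x) y * dvec (Suc k) t"
      by (simp add: Suc chain_f_eq_Lform dext_br_def Let_def sc_def dmap_proj coeff_br_proj
          Lform_proj_right)
    show "chain_br (dmap c) (Suc k) x y t = coeff_br (Suc k) ?E x y t"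
    proof (cases t)
      case (Inl i)
      with step show ?thesis by (simp add: dvec_def)
    next
      case (Inr m)
      consider "1 \<le> m \<and> m \<le> k" | "m = Suc k" | "m = 0 \<or> Suc k < m" by linarith
      then show ?thesis
      proof cases
        case 1
        with step Inr show ?thesis
          by (simp add: coeff_br_chain_coeffs_Suc_below dvec_def)
      next
        case 2
        with step Inr show ?thesis
          unfolding Inr 2 coeff_br_chain_coeffs_Suc_top
          by (simp add: coeff_br_Inr dmap_Inr dvec_def)
      next
        case 3
        with step Inr show ?thesis
          by (auto simp: coeff_br_Inr dmap_Inr dvec_def)
      qed
    qed
  qed
qed

lemma TwoSP_dmap: "TwoSP n (dmap c)"
  by (auto simp: TwoSP_def A2car_def dmap_def fun_eq_iff split: sum.split)

lemma dmap_bvec: "j \<in> {1..k} \<Longrightarrow> m \<in> {1..k} \<Longrightarrow> dmap c k (bvec j) (Inr m) = c (Suc k) j m"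
  unfolding dmap_Inr bvec_def by (simp add: if_distrib_times cong: if_cong)

lemma dmap_in_Acar: "dmap c k x \<in> Acar k"
  by (auto simp: Acar_def dmap_Inr)

lemma dmap_add: "dmap c k (x + y) = dmap c k x + dmap c k y"
  by (auto simp: dmap_def fun_eq_iff distrib_right sum.distrib split: sum.split)

lemma dmap_sc: "dmap c k (sc a x) = sc a (dmap c k x)"
  by (auto simp: dmap_def sc_def fun_eq_iff sum_distrib_left mult_ac split: sum.split)

lemma dmap_vanishes: "(\<And>i. x (Inl i) = 0) \<Longrightarrow> dmap c k x = 0"
  by (auto simp: dmap_def fun_eq_iff split: sum.split)

lemma Lform_dmap_skew:
  "Lform k (dmap c k x) y + Lform k x (dmap c k y) =
     (\<Sum>j=1..k. \<Sum>m=1..k. x (Inl j) * y (Inl m) * (c (Suc k) j m + c (Suc k) m j))"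
proof -
  have "Lform k x (dmap c k y) = (\<Sum>m=1..k. \<Sum>j=1..k. y (Inl m) * x (Inl j) * c (Suc k) m j)"
    by (subst Lform_commute) (rule Lform_dmap_left)
  also have "\<dots> = (\<Sum>j=1..k. \<Sum>m=1..k. x (Inl j) * y (Inl m) * c (Suc k) m j)"
    by (subst sum.swap) (simp add: mult_ac)
  finally show ?thesis
    by (simp add: Lform_dmap_left distrib_left sum.distrib)
qed

lemma is_chain_dmap_iff: "is_chain n (dmap c) \<longleftrightarrow> skew_lower_blocks n c"
proof -
  have "is_chain n (dmap c) \<longleftrightarrow>
      (\<forall>k<n. \<forall>x\<in>Acar k. \<forall>y\<in>Acar k. Lform k (dmap c k x) y + Lform k x (dmap c k y) = 0)"
    by (simp add: is_chain_def chain_f_eq_Lform chain_br_eq_coeff_br dmap_in_Acar dmap_add dmap_sc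
        dmap_vanishes coeff_br_zero_left coeff_br_zero_right)
  also have "\<dots> \<longleftrightarrow> skew_lower_blocks n c"
  proof
    assume skew_form:
      "\<forall>k<n. \<forall>x\<in>Acar k. \<forall>y\<in>Acar k. Lform k (dmap c k x) y + Lform k x (dmap c k y) = 0"
    show "skew_lower_blocks n c"
      unfolding skew_lower_blocks_def
    proof (intro allI impI ballI)
      fix k j m assume "k < n" "j \<in> {1..k}" "m \<in> {1..k}"
      with skew_form have
          "Lform k (dmap c k (bvec j)) (bvec m) + Lform k (bvec j) (dmap c k (bvec m)) = 0"
        using bvec_in_Acar by blast
      with \<open>j \<in> {1..k}\<close> \<open>m \<in> {1..k}\<close> show "c (Suc k) j m = - c (Suc k) m j"
        by (simp add: Lform_bvec_left Lform_bvec_right dmap_bvec eq_neg_iff_add_eq_0)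
    qed
  next
    assume skew: "skew_lower_blocks n c"
    show "\<forall>k<n. \<forall>x\<in>Acar k. \<forall>y\<in>Acar k. Lform k (dmap c k x) y + Lform k x (dmap c k y) = 0"
    proof (intro allI impI ballI)
      fix k and x y :: "nat + nat \<Rightarrow> 'a" assume "k < n"
      have "c (Suc k) j m + c (Suc k) m j = 0" if "j \<in> {1..k}" "m \<in> {1..k}" for j m
      proof -
        have "c (Suc k) j m = - c (Suc k) m j"
          using skew \<open>k < n\<close> that unfolding skew_lower_blocks_def by blast
        then show ?thesis by simp
      qed
      then show "Lform k (dmap c k x) y + Lform k x (dmap c k y) = 0"
        by (simp add: Lform_dmap_skew)
    qed
  qed
  finally show ?thesis .
qed

lemma NNP_dmap_iff: "NNP n (dmap c) \<longleftrightarrow> (\<exists>k<n. \<exists>j\<in>{1..k}. \<exists>m\<in>{1..k}. c (Suc k) j m \<noteq> 0)"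
proof
  assume "NNP n (dmap c)"
  then obtain k x where k: "k < n" and "dmap c k x \<noteq> 0"
    unfolding NNP_def by blast
  then obtain t where "dmap c k x t \<noteq> 0"
    by (auto simp: fun_eq_iff)
  moreover from this obtain m where "t = Inr m"
    by (cases t) auto
  ultimately have m: "m \<in> {1..k}" and "(\<Sum>j=1..k. x (Inl j) * c (Suc k) j m) \<noteq> 0"
    by (auto simp: dmap_Inr split: if_splits)
  then obtain j where "j \<in> {1..k}" "x (Inl j) * c (Suc k) j m \<noteq> 0"
    by (meson sum.not_neutral_contains_not_neutral)
  then have "c (Suc k) j m \<noteq> 0"
    by simp
  with k m \<open>j \<in> {1..k}\<close> show "\<exists>k<n. \<exists>j\<in>{1..k}. \<exists>m\<in>{1..k}. c (Suc k) j m \<noteq> 0"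
    by blast
next
  assume "\<exists>k<n. \<exists>j\<in>{1..k}. \<exists>m\<in>{1..k}. c (Suc k) j m \<noteq> 0"
  then obtain k j m where "k < n" "j \<in> {1..k}" "m \<in> {1..k}" "c (Suc k) j m \<noteq> 0"
    by blast
  then have "dmap c k (bvec j) (Inr m) \<noteq> 0"
    by (simp add: dmap_bvec)
  then have "dmap c k (bvec j) \<noteq> 0"
    by auto
  with \<open>k < n\<close> \<open>j \<in> {1..k}\<close> show "NNP n (dmap c)"
    unfolding NNP_def using bvec_in_Acar by blast
qed

lemma skew_lower_blocksD:
  assumes "skew_lower_blocks n c" "p \<le> n" "1 \<le> j" "j < p" "1 \<le> m" "m < p"
  shows "c p j m = - c p m j"
proof -
  have "p - 1 < n" "j \<in> {1..p - 1}" "m \<in> {1..p - 1}" "Suc (p - 1) = p"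
    using assms(2-6) by auto
  then show ?thesis
    using assms(1) unfolding skew_lower_blocks_def by metis
qed

lemma alternating_coeffs_chain_coeffs:
  assumes "skew_lower_blocks n c"
  shows "alternating_coeffs n (chain_coeffs c)"
  unfolding alternating_coeffs_def
proof (intro ballI conjI)
  fix i j m assume ijm: "i \<in> {1..n}" "j \<in> {1..n}" "m \<in> {1..n}"
  have top_j: "c j m i = - c j i m" if "i < j" "m < j"
    using ijm that by (intro skew_lower_blocksD[OF assms]) auto
  have top_m: "c m i j = - c m j i" if "i < m" "j < m"
    using ijm that by (intro skew_lower_blocksD[OF assms]) auto
  show "chain_coeffs c i j m = - chain_coeffs c j i m"
    using top_m by (auto simp: chain_coeffs_def)
  show "chain_coeffs c i j m = chain_coeffs c j m i"
    using top_j top_m by (auto simp: chain_coeffs_def)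
qed

lemma chain_coeffs_eq_if_alternating:
  fixes c :: "nat \<Rightarrow> nat \<Rightarrow> nat \<Rightarrow> 'a::field_char_0"
  assumes alt: "alternating_coeffs n c" and ijm: "i \<in> {1..n}" "j \<in> {1..n}" "m \<in> {1..n}"
  shows "chain_coeffs c i j m = c i j m"
proof -
  have swap12: "c j i m = - c i j m" and rotate: "c m i j = c i j m"
    using alternating_coeffs_swap12[OF alt ijm] alternating_coeffs_rotate[OF alt ijm(3,1,2)]
      alternating_coeffs_rotate[OF alt ijm(2,3,1)] by simp_all
  consider "j < i \<and> m < i" | "i < j \<and> m < j" | "i < m \<and> j < m" | "i = j" | "i = m" | "j = m"
    by linarith
  then show ?thesis
  proof cases
    case 4
    then show ?thesis
      using alternating_coeffs_repeat12[OF alt ijm(1,3)]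
        alternating_coeffs_repeat23[OF alt ijm(1,3)] by (auto simp: chain_coeffs_def)
  next
    case 5
    then show ?thesis
      using alternating_coeffs_rotate[OF alt ijm(3,2,3)]
        alternating_coeffs_repeat23[OF alt ijm(3,2)] by (auto simp: chain_coeffs_def)
  next
    case 6
    then show ?thesis
      using alternating_coeffs_repeat23[OF alt ijm(2,1)] by (auto simp: chain_coeffs_def)
  qed (use swap12 rotate in \<open>auto simp: chain_coeffs_def\<close>)
qed

lemma nonzero_chain_coeffs_iff:
  "nonzero_coeffs n (chain_coeffs c) \<longleftrightarrow> (\<exists>k<n. \<exists>j\<in>{1..k}. \<exists>m\<in>{1..k}. c (Suc k) j m \<noteq> 0)"
proof
  assume "nonzero_coeffs n (chain_coeffs c)"
  then obtain i j m where ijm: "i \<in> {1..n}" "j \<in> {1..n}" "m \<in> {1..n}" "chain_coeffs c i j m \<noteq> 0"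
    unfolding nonzero_coeffs_def by blast
  have lower: "\<exists>k<n. \<exists>j\<in>{1..k}. \<exists>m\<in>{1..k}. c (Suc k) j m \<noteq> 0"
    if "p \<in> {1..n}" "j' \<in> {1..n}" "m' \<in> {1..n}" "j' < p" "m' < p" "c p j' m' \<noteq> 0" for p j' m'
    using that by (intro exI[of _ "p - 1"] conjI bexI[of _ j'] bexI[of _ m']) auto
  from ijm(4) consider "j < i \<and> m < i \<and> c i j m \<noteq> 0" | "i < j \<and> m < j \<and> c j i m \<noteq> 0"
      | "i < m \<and> j < m \<and> c m i j \<noteq> 0"
    unfolding chain_coeffs_def by (auto split: if_splits)
  then show "\<exists>k<n. \<exists>j\<in>{1..k}. \<exists>m\<in>{1..k}. c (Suc k) j m \<noteq> 0"
  proof cases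
    case 1
    then show ?thesis using lower[of i j m] ijm(1-3) by blast
  next
    case 2
    then show ?thesis using lower[of j i m] ijm(1-3) by blast
  next
    case 3
    then show ?thesis using lower[of m i j] ijm(1-3) by blast
  qed
next
  assume "\<exists>k<n. \<exists>j\<in>{1..k}. \<exists>m\<in>{1..k}. c (Suc k) j m \<noteq> 0"
  then obtain k j m where "k < n" "j \<in> {1..k}" "m \<in> {1..k}" "c (Suc k) j m \<noteq> 0"
    by blast
  then show "nonzero_coeffs n (chain_coeffs c)"
    unfolding nonzero_coeffs_def
    by (intro bexI[of _ "Suc k"] bexI[of _ j] bexI[of _ m]) (auto simp: chain_coeffs_def)
qed

lemma skew_lower_blocks_if_alternating:
  "alternating_coeffs n c \<Longrightarrow> skew_lower_blocks n c"
  unfolding skew_lower_blocks_def by (auto intro: alternating_coeffs_swap23)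

theorem double_extension_chain_iff:
  fixes c :: "nat \<Rightarrow> nat \<Rightarrow> nat \<Rightarrow> 'a::field_char_0"
  shows "is_chain n (dmap c) \<and> NNP n (dmap c) \<and> TwoSP n (dmap c) \<and>
      (\<forall>x\<in>Acar n. \<forall>y\<in>Acar n.
         chain_br (dmap c) n x y = coeff_br n c x y \<and> chain_f (dmap c) n x y = Lform n x y)
    \<longleftrightarrow> alternating_coeffs n c \<and> nonzero_coeffs n c"
proof -
  have realises:
    "(\<forall>x\<in>Acar n. \<forall>y\<in>Acar n.
        chain_br (dmap c) n x y = coeff_br n c x y \<and> chain_f (dmap c) n x y = Lform n x y)
     \<longleftrightarrow> (\<forall>i\<in>{1..n}. \<forall>j\<in>{1..n}. \<forall>m\<in>{1..n}. chain_coeffs c i j m = c i j m)"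
    by (simp add: chain_br_eq_coeff_br chain_f_eq_Lform coeff_br_eq_iff)
  have "skew_lower_blocks n c \<and> nonzero_coeffs n (chain_coeffs c) \<and>
      (\<forall>i\<in>{1..n}. \<forall>j\<in>{1..n}. \<forall>m\<in>{1..n}. chain_coeffs c i j m = c i j m)
    \<longleftrightarrow> alternating_coeffs n c \<and> nonzero_coeffs n c" (is "?skew \<and> ?nonzero \<and> ?same \<longleftrightarrow> _")
  proof
    assume chain: "?skew \<and> ?nonzero \<and> ?same"
    then have "alternating_coeffs n (chain_coeffs c) \<longleftrightarrow> alternating_coeffs n c"
      and "nonzero_coeffs n (chain_coeffs c) \<longleftrightarrow> nonzero_coeffs n c"
      by (intro alternating_coeffs_cong nonzero_coeffs_cong; blast)+
    with chain show "alternating_coeffs n c \<and> nonzero_coeffs n c"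
      using alternating_coeffs_chain_coeffs by blast
  next
    assume alternating: "alternating_coeffs n c \<and> nonzero_coeffs n c"
    then have ?same
      using chain_coeffs_eq_if_alternating by blast
    then have "nonzero_coeffs n (chain_coeffs c) \<longleftrightarrow> nonzero_coeffs n c"
      by (intro nonzero_coeffs_cong) blast
    with alternating \<open>?same\<close> show "?skew \<and> ?nonzero \<and> ?same"
      using skew_lower_blocks_if_alternating by blast
  qed
  then show ?thesis
    unfolding realises is_chain_dmap_iff NNP_dmap_iff nonzero_chain_coeffs_iff[symmetric]
    by (simp add: TwoSP_dmap)
qed

theorem theorem3p1:
  fixes c :: "nat \<Rightarrow> nat \<Rightarrow> nat \<Rightarrow> 'a::field_char_0" and n :: nat
  assumes "3 \<le> n"
  shows
    "let L = (Acar n :: (nat + nat \<Rightarrow> 'a) set);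
         w = wfun c n;
         P_a = (quadratic_lie_algebra L (Lbr c n) (Lform n) \<and> two_step_nilpotent L (Lbr c n));
         P_b = (nonzero_w n w \<and> cyclic_cocycle n w \<and>
                (\<forall>x\<in>L. \<forall>y\<in>L. Lbr c n x y = Tstar_br n w x y \<and> Lform n x y = qB n x y));
         P_c = (is_chain n (dmap c) \<and> NNP n (dmap c) \<and> TwoSP n (dmap c) \<and>
                (\<forall>x\<in>L. \<forall>y\<in>L. chain_br (dmap c) n x y = Lbr c n x y \<and>
                              chain_f (dmap c) n x y = Lform n x y));
         M = (\<lambda>i k j. c i j k);
         P_d = (n_quadratic_family n M \<and> non_null_family n M \<and>
                (\<forall>x\<in>L. \<forall>y\<in>L. qa_br n M x y = Lbr c n x y \<and> qa_form n x y = Lform n x y))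
     in (P_a \<longleftrightarrow> P_b) \<and> (P_b \<longleftrightarrow> P_c) \<and> (P_c \<longleftrightarrow> P_d)"
  unfolding Let_def Lbr_eq_coeff_br Tstar_br_wfun_eq_coeff_br qB_eq_Lform qa_br_eq_coeff_br
    qa_form_eq_Lform
  by (simp add: quadratic_two_step_nilpotent_iff cyclic_cocycle_iff double_extension_chain_iff
      n_quadratic_family_iff non_null_family_iff)

end
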